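(* Let $\tau,t\in\mathbb{R}$ and let $P_n(x;\tau,t)$ be the monic orthogonal polynomials for the weight $\omega(x;\tau,t)=\exp(-x^6+\tau x^4+tx^2)$ on $\mathbb{R}$, with recurrence coefficients $\beta_n$. Write $C_n=\beta_{n-1}+\beta_n+\beta_{n+1}$. Then for $n\ge1$ $$\frac{d^2P_n}{dx^2}+R_n(x;\tau,t)\frac{dP_n}{dx}+T_n(x;\tau,t)P_n=0,$$ where $$R_n=2x\left\{t-3x^4+2\tau x^2-\frac{2\{6x^2-2\tau+3(\beta_n+\beta_{n+1})\}}{6x^4-4\tau x^2-2t+6\beta_nC_n+6\beta_{n+1}C_{n+1}+(\beta_n+\beta_{n+1})(6x^2-4\tau)}\right\},$$ and \begin{align*} T_n&=2\beta_n(3C_n-2\tau+9x^2)-4x^2\beta_n(3C_n-2\tau+3x^2)\{\beta_n(3C_n-2\tau+3x^2)-t+3x^4-2\tau x^2\}\\ &\quad+\beta_{n}\{6C_{n-1}\beta_{n-1}+6C_n\beta_n+(\beta_{n-1}+\beta_n)(6x^2-4\tau)-2t+6x^4-4\tau x^2\}\\ &\qquad\times\{6C_n\beta_n+6C_{n+1}\beta_{n+1}+(\beta_n+\beta_{n+1})(6x^2-4\tau)-2t+6x^4-4\tau x^2\}\\ &\quad+\frac{4x^2\beta_n(3C_n-2\tau+3x^2)\{3(\beta_n+\beta_{n+1})-2\tau+6x^2\}}{2\tau(\beta_n+\beta_{n+1})-3x^2(\beta_n+\beta_{n+1})-3C_n\beta_n-3C_{n+1}\beta_{n+1}+t-3x^4+2\tau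 x^2}. \end{align*}
   Context: The monic polynomials $P_n(x;\tau,t)$ of exact degree $n$ are orthogonal with respect to $\omega(x;\tau,t)$ on $\mathbb{R}$. They satisfy $P_{n+1}(x)=xP_n(x)-\beta_nP_{n-1}(x)$ with $P_{-1}=0$, $P_0=1$, where $\beta_n>0$ for $n\ge1$. The convention $\beta_0=0$ is used. *)

theory Defs
  imports "HOL-Analysis.Analysis" "HOL-Computational_Algebra.Polynomial"
begin

definition omega :: "real \<Rightarrow> real \<Rightarrow> real \<Rightarrow> real" where
  "omega \<tau> t x = exp (- (x ^ 6) + \<tau> * x ^ 4 + t * x ^ 2)"

definition monic_OPS :: "(real \<Rightarrow> real) \<Rightarrow> (nat \<Rightarrow> real poly) \<Rightarrow> bool" where
  "monic_OPS w P \<longleftrightarrow>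
     (\<forall>n. degree (P n) = n \<and> lead_coeff (P n) = 1) \<and>
     (\<forall>m n. m \<noteq> n \<longrightarrow>
        (\<integral>x. poly (P m) x * poly (P n) x * w x \<partial>lborel) = 0)"

definition rec_coeffs :: "(nat \<Rightarrow> real poly) \<Rightarrow> (nat \<Rightarrow> real) \<Rightarrow> bool" where
  "rec_coeffs P \<beta> \<longleftrightarrow> \<beta> 0 = 0 \<and>
     (\<forall>n. P (Suc n) = [:0, 1:] * P n - smult (\<beta> n) (if n = 0 then 0 else P (n - 1)))"

text \<open>C n = beta(n-1) + beta n + beta(n+1); only used for n \<ge> 1, or multiplied by beta 0 = 0.\<close>
definition Cc :: "(nat \<Rightarrow> real) \<Rightarrow> nat \<Rightarrow> real" where
  "Cc \<beta> n = \<beta> (n - 1) + \<beta> n + \<beta> (n + 1)"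

definition Rn :: "(nat \<Rightarrow> real) \<Rightarrow> real \<Rightarrow> real \<Rightarrow> nat \<Rightarrow> real \<Rightarrow> real" where
  "Rn \<beta> \<tau> t n x = 2 * x * (t - 3 * x ^ 4 + 2 * \<tau> * x ^ 2
     - 2 * (6 * x ^ 2 - 2 * \<tau> + 3 * (\<beta> n + \<beta> (n + 1)))
       / (6 * x ^ 4 - 4 * \<tau> * x ^ 2 - 2 * t + 6 * \<beta> n * Cc \<beta> n
          + 6 * \<beta> (n + 1) * Cc \<beta> (n + 1) + (\<beta> n + \<beta> (n + 1)) * (6 * x ^ 2 - 4 * \<tau>)))"

definition Tn :: "(nat \<Rightarrow> real) \<Rightarrow> real \<Rightarrow> real \<Rightarrow> nat \<Rightarrow> real \<Rightarrow> real" where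
  "Tn \<beta> \<tau> t n x =
     2 * \<beta> n * (3 * Cc \<beta> n - 2 * \<tau> + 9 * x ^ 2)
     - 4 * x ^ 2 * \<beta> n * (3 * Cc \<beta> n - 2 * \<tau> + 3 * x ^ 2)
         * (\<beta> n * (3 * Cc \<beta> n - 2 * \<tau> + 3 * x ^ 2) - t + 3 * x ^ 4 - 2 * \<tau> * x ^ 2)
     + \<beta> n * (6 * Cc \<beta> (n - 1) * \<beta> (n - 1) + 6 * Cc \<beta> n * \<beta> n
               + (\<beta> (n - 1) + \<beta> n) * (6 * x ^ 2 - 4 * \<tau>) - 2 * t + 6 * x ^ 4 - 4 * \<tau> * x ^ 2)
         * (6 * Cc \<beta> n * \<beta> n + 6 * Cc \<beta> (n + 1) * \<beta> (n + 1)
               + (\<beta> n + \<beta> (n + 1)) * (6 * x ^ 2 - 4 * \<tau>) - 2 * t + 6 * x ^ 4 - 4 * \<tau> * x ^ 2)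
     + 4 * x ^ 2 * \<beta> n * (3 * Cc \<beta> n - 2 * \<tau> + 3 * x ^ 2)
         * (3 * (\<beta> n + \<beta> (n + 1)) - 2 * \<tau> + 6 * x ^ 2)
       / (2 * \<tau> * (\<beta> n + \<beta> (n + 1)) - 3 * x ^ 2 * (\<beta> n + \<beta> (n + 1))
          - 3 * Cc \<beta> n * \<beta> n - 3 * Cc \<beta> (n + 1) * \<beta> (n + 1) + t - 3 * x ^ 4 + 2 * \<tau> * x ^ 2)"

end

theory Submission
  imports Defs "HOL-Probability.Distributions" "HOL-Real_Asymp.Real_Asymp"
begin

text \<open>
  Write omega = exp (- V) and L q for the integral of q omega; integration by
  parts gives L (q') = L (q V'). Expanding P n' in the orthogonal basis, and computing
  L (x^j P a P k) by walking along the three-term recurrence, gives the lowering relation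
  P n' = \<beta> n A n P (n - 1) - B n P n with explicit polynomials A n, B n; each coefficient is
  a finite identity in the \<beta>'s. As B n + B (n + 1) = x A n - V' identically, the
  recurrence turns the lowering relation at n - 1 into the raising relation
  P (n - 1)' = (B n + V') P (n - 1) - A (n - 1) P n. Eliminating P (n - 1) between these two
  relations and the derivative of the first one gives the equation, with
  R n = - V' - A n' / A n and T n = B n' - B n (B n + V') + \<beta> n A n A (n - 1) - B n A n' / A n.
\<close>

section \<open>Decay of the weight and integration by parts\<close>

lemma cubic_bounded_above:
  fixes a b :: real
  shows "\<exists>c. \<forall>y \<ge> 0. a * y ^ 2 + b * y - y ^ 3 \<le> c"
proof -
  define A where "A = \<bar>a\<bar> + \<bar>b\<bar>"
  have A: "A \<ge> 0" by (simp add: A_def)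
  have "a * y ^ 2 + b * y - y ^ 3 \<le> A ^ 3 + \<bar>b\<bar>" if y: "y \<ge> 0" for y
  proof -
    have "y \<le> y ^ 2 + 1"
      using zero_le_power2[of "y - 1/2"] by (simp add: power2_eq_square algebra_simps)
    have "b * y \<le> \<bar>b\<bar> * y" using y by (simp add: mult_right_mono)
    also have "\<dots> \<le> \<bar>b\<bar> * (y ^ 2 + 1)" using \<open>y \<le> y ^ 2 + 1\<close> by (simp add: mult_left_mono)
    finally have "b * y \<le> \<bar>b\<bar> * (y ^ 2 + 1)" .
    moreover have "a * y ^ 2 \<le> \<bar>a\<bar> * y ^ 2" by (simp add: mult_right_mono)
    moreover have "y ^ 2 * (A - y) \<le> A ^ 3"
    proof (cases "y \<le> A")
      case True
      have "y ^ 2 * (A - y) \<le> A ^ 2 * A"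
        using True y by (intro mult_mono power_mono) auto
      then show ?thesis by (simp add: power3_eq_cube power2_eq_square)
    next
      case False
      then have "y ^ 2 * (A - y) \<le> 0" by (simp add: mult_nonneg_nonpos)
      moreover have "0 \<le> A ^ 3" using A by simp
      ultimately show ?thesis by linarith
    qed
    moreover have "y ^ 2 * (A - y) = \<bar>a\<bar> * y ^ 2 + \<bar>b\<bar> * y ^ 2 - y ^ 3"
      by (simp add: A_def power3_eq_cube power2_eq_square algebra_simps)
    ultimately show ?thesis by (simp add: algebra_simps)
  qed
  then show ?thesis by blast
qed

lemma omega_le_exp_neg_square: "\<exists>c. \<forall>x. omega \<tau> t x \<le> c * exp (- (x ^ 2))"
proof -
  obtain c where c: "\<And>y::real. y \<ge> 0 \<Longrightarrow> \<tau> * y ^ 2 + (t + 1) * y - y ^ 3 \<le> c"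
    using cubic_bounded_above by blast
  have "omega \<tau> t x \<le> exp c * exp (- (x ^ 2))" for x
  proof -
    have "\<tau> * (x ^ 2) ^ 2 + (t + 1) * x ^ 2 - (x ^ 2) ^ 3 \<le> c" by (rule c) simp
    then have "- (x ^ 6) + \<tau> * x ^ 4 + t * x ^ 2 \<le> c - x ^ 2"
      by (simp add: power_mult[symmetric] algebra_simps)
    then show ?thesis by (simp add: omega_def exp_add[symmetric])
  qed
  then show ?thesis by blast
qed

lemma abs_poly_le_exp:
  fixes x :: real
  shows "\<bar>poly p x\<bar> \<le> (\<Sum>i\<le>degree p. \<bar>coeff p i\<bar>) * exp (real (degree p) * x ^ 2)"
proof -
  have "\<bar>x\<bar> ^ i \<le> exp (real (degree p) * x ^ 2)" if "i \<le> degree p" for i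
  proof -
    have "\<bar>x\<bar> \<le> 1 + x ^ 2"
      using zero_le_power2[of "\<bar>x\<bar> - 1/2"] by (simp add: power2_eq_square algebra_simps)
    also have "\<dots> \<le> exp (x ^ 2)" by (rule exp_ge_add_one_self)
    finally have "\<bar>x\<bar> ^ i \<le> exp (x ^ 2) ^ i" by (intro power_mono) auto
    also have "\<dots> = exp (real i * x ^ 2)" by (simp add: exp_of_nat_mult)
    also have "\<dots> \<le> exp (real (degree p) * x ^ 2)" using that by (simp add: mult_right_mono)
    finally show ?thesis .
  qed
  then have "\<bar>\<Sum>i\<le>degree p. coeff p i * x ^ i\<bar> \<le> (\<Sum>i\<le>degree p. \<bar>coeff p i\<bar> * exp (real (degree p) * x ^ 2))"
    by (intro order_trans[OF sum_abs] sum_mono) (simp add: abs_mult power_abs mult_left_mono)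
  then show ?thesis by (simp add: poly_altdef sum_distrib_right)
qed

lemma poly_omega_le_exp_neg_square: "\<exists>M. \<forall>x. \<bar>poly p x * omega \<tau> t x\<bar> \<le> M * exp (- (x ^ 2))"
proof -
  define K where "K = (\<Sum>i\<le>degree p. \<bar>coeff p i\<bar>)"
  obtain c where c: "\<And>x. omega \<tau> (t + real (degree p)) x \<le> c * exp (- (x ^ 2))"
    using omega_le_exp_neg_square by blast
  have "\<bar>poly p x * omega \<tau> t x\<bar> \<le> (K * c) * exp (- (x ^ 2))" for x
  proof -
    have "\<bar>poly p x * omega \<tau> t x\<bar> \<le> K * exp (real (degree p) * x ^ 2) * omega \<tau> t x"
      using abs_poly_le_exp[of p x]
      by (simp add: abs_mult K_def omega_def mult_right_mono)
    also have "\<dots> = K * omega \<tau> (t + real (degree p)) x"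
      by (simp add: omega_def exp_add[symmetric] algebra_simps)
    also have "\<dots> \<le> K * (c * exp (- (x ^ 2)))"
      using c by (intro mult_left_mono) (auto simp: K_def sum_nonneg)
    finally show ?thesis by simp
  qed
  then show ?thesis by blast
qed

lemma integrable_poly_omega: "integrable lborel (\<lambda>x. poly p x * omega \<tau> t x)"
proof -
  obtain M where M: "\<And>x. \<bar>poly p x * omega \<tau> t x\<bar> \<le> M * exp (- (x ^ 2))"
    using poly_omega_le_exp_neg_square by blast
  have "integrable lborel (\<lambda>x::real. exp (- (x ^ 2)))"
    using has_bochner_integral_even_function[OF gaussian_moment_0]
    by (auto simp: has_bochner_integral_iff)
  then show ?thesis
  proof (rule Bochner_Integration.integrable_bound[OF integrable_mult_right])
    show "(\<lambda>x. poly p x * omega \<tau> t x) \<in> borel_measurable lborel"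
      unfolding measurable_lborel2 omega_def
      by (intro borel_measurable_continuous_onI continuous_intros)
    show "AE x in lborel. norm (poly p x * omega \<tau> t x) \<le> norm (M * exp (- (x ^ 2)))"
      using M by (auto intro: order_trans[OF _ abs_ge_self])
  qed
qed

lemma poly_omega_tendsto_0:
  "((\<lambda>x. poly p x * omega \<tau> t x) \<longlongrightarrow> 0) at_top"
  "((\<lambda>x. poly p x * omega \<tau> t x) \<longlongrightarrow> 0) at_bot"
proof -
  obtain M where M: "\<And>x. \<bar>poly p x * omega \<tau> t x\<bar> \<le> M * exp (- (x ^ 2))"
    using poly_omega_le_exp_neg_square by blast
  have "((\<lambda>x::real. M * exp (- (x ^ 2))) \<longlongrightarrow> 0) at_top" by real_asymp
  then show "((\<lambda>x. poly p x * omega \<tau> t x) \<longlongrightarrow> 0) at_top"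
    by (rule Lim_null_comparison[rotated]) (use M in auto)
  have "((\<lambda>x::real. M * exp (- (x ^ 2))) \<longlongrightarrow> 0) at_bot" by real_asymp
  then show "((\<lambda>x. poly p x * omega \<tau> t x) \<longlongrightarrow> 0) at_bot"
    by (rule Lim_null_comparison[rotated]) (use M in auto)
qed

(* omega = exp (- V) with V x = x^6 - \<tau> x^4 - t x^2, and dpotential is V'. *)
definition dpotential :: "real \<Rightarrow> real \<Rightarrow> real poly" where
  "dpotential \<tau> t = [:0, - 2 * t, 0, - 4 * \<tau>, 0, 6:]"

lemma poly_dpotential: "poly (dpotential \<tau> t) x = 6 * x ^ 5 - 4 * \<tau> * x ^ 3 - 2 * t * x"
  by (simp add: dpotential_def algebra_simps power_numeral_reduce)

lemma omega_has_real_derivative: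
  "(omega \<tau> t has_real_derivative - poly (dpotential \<tau> t) x * omega \<tau> t x) (at x)"
  unfolding omega_def poly_dpotential
  by (rule derivative_eq_intros refl | simp)+

definition omega_functional :: "real \<Rightarrow> real \<Rightarrow> real poly \<Rightarrow> real" where
  "omega_functional \<tau> t q = (\<integral>x. poly q x * omega \<tau> t x \<partial>lborel)"

lemma omega_functional_add:
  "omega_functional \<tau> t (p + q) = omega_functional \<tau> t p + omega_functional \<tau> t q"
  unfolding omega_functional_def poly_add distrib_right
  by (rule Bochner_Integration.integral_add[OF integrable_poly_omega integrable_poly_omega])

lemma omega_functional_smult: "omega_functional \<tau> t (smult c p) = c * omega_functional \<tau> t p"
  unfolding omega_functional_def poly_smult mult.assoc by (rule integral_mult_right_zero)

lemma omega_functional_pderiv: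
  "omega_functional \<tau> t (pderiv q) = omega_functional \<tau> t (q * dpotential \<tau> t)"
proof -
  let ?F = "\<lambda>x. poly q x * omega \<tau> t x"
  let ?f = "\<lambda>x. poly (pderiv q - q * dpotential \<tau> t) x * omega \<tau> t x"
  have "(?F has_vector_derivative ?f x) (at x)" for x
  proof -
    have "(?F has_real_derivative poly (pderiv q) x * omega \<tau> t x
        + (- poly (dpotential \<tau> t) x * omega \<tau> t x) * poly q x) (at x)"
      by (rule DERIV_mult[OF poly_DERIV omega_has_real_derivative])
    then show ?thesis
      by (simp add: has_real_derivative_iff_has_vector_derivative[symmetric] algebra_simps)
  qed
  moreover have "isCont ?f x" for x
    unfolding omega_def by (intro continuous_intros)
  moreover have "integrable lborel ?f" by (rule integrable_poly_omega)
  ultimately have "(LBINT x=-\<infinity>..\<infinity>. ?f x) = 0 - 0"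
    using poly_omega_tendsto_0
    by (intro interval_integral_FTC_integrable[where F = ?F])
       (auto simp: ereal_tendsto_simps1 set_integrable_def)
  then have "omega_functional \<tau> t (pderiv q - q * dpotential \<tau> t) = 0"
    by (simp add: omega_functional_def interval_lebesgue_integral_def set_lebesgue_integral_def)
  then show ?thesis
    using omega_functional_add[of \<tau> t "pderiv q - q * dpotential \<tau> t" "q * dpotential \<tau> t"]
    by simp
qed

lemma omega_functional_square_eq_0:
  assumes "omega_functional \<tau> t (q * q) = 0"
  shows "q = 0"
proof (rule ccontr)
  assume "q \<noteq> 0"
  have "AE x in lborel. 0 \<le> poly (q * q) x * omega \<tau> t x"
    by (simp add: omega_def)
  then have "AE x in lborel. poly (q * q) x * omega \<tau> t x = 0"
    using assms integral_nonneg_eq_0_iff_AE[OF integrable_poly_omega]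
    unfolding omega_functional_def by blast
  moreover have "AE x in lborel. poly q x \<noteq> 0"
    using \<open>q \<noteq> 0\<close> AE_not_in[OF finite_imp_null_set_lborel[OF poly_roots_finite]] by simp
  ultimately have "AE x::real in lborel. False"
    by eventually_elim (simp add: omega_def)
  then have "ae_filter (lborel :: real measure) = bot"
    by (simp add: trivial_limit_def)
  then show False by (simp add: ae_filter_eq_bot_iff)
qed

section \<open>Orthogonal polynomials of a nondegenerate moment functional\<close>

(* Entry (a, k) of the j-th power of the Jacobi operator e_a \<mapsto> e_(a+1) + b a e_(a-1):
   the coefficient of P k in the expansion of x^j P a. *)
fun xpow_coeff :: "(int \<Rightarrow> real) \<Rightarrow> nat \<Rightarrow> int \<Rightarrow> int \<Rightarrow> real" where
  "xpow_coeff b 0 a k = (if a = k then 1 else 0)"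
| "xpow_coeff b (Suc j) a k = xpow_coeff b j (a + 1) k + b a * xpow_coeff b j (a - 1) k"

lemma xpow_coeff_eq_0: "j < \<bar>a - k\<bar> \<Longrightarrow> xpow_coeff b j a k = 0"
  by (induction j arbitrary: a) auto

lemma xpow_coeff_shift: "xpow_coeff b j a k = xpow_coeff (\<lambda>i. b (s + i)) j (a - s) (k - s)"
  by (induction j arbitrary: a) (auto simp: algebra_simps)

locale monic_ops =
  fixes L :: "real poly \<Rightarrow> real" and P :: "nat \<Rightarrow> real poly" and \<beta> :: "nat \<Rightarrow> real"
  assumes L_add: "L (p + q) = L p + L q"
    and L_smult: "L (smult c p) = c * L p"
    and L_square_eq_0: "L (q * q) = 0 \<Longrightarrow> q = 0"
    and degree_P: "degree (P n) = n"
    and lead_coeff_P: "lead_coeff (P n) = 1"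
    and L_P_P: "m \<noteq> n \<Longrightarrow> L (P m * P n) = 0"
    and rec_coeffs: "rec_coeffs P \<beta>"
begin

lemma L_0 [simp]: "L 0 = 0"
  using L_smult[of 0 0] by simp

lemma L_diff: "L (p - q) = L p - L q"
  using L_add[of "p - q" q] by simp

lemma L_sum: "L (sum f A) = (\<Sum>a\<in>A. L (f a))"
  by (induction A rule: infinite_finite_induct) (auto simp: L_add)

lemma beta_0: "\<beta> 0 = 0"
  using rec_coeffs by (simp add: rec_coeffs_def)

lemma P_0: "P 0 = 1"
  using degree_P[of 0] lead_coeff_P[of 0] by (auto elim!: degree_eq_zeroE)

lemma x_mult_P: "[:0, 1:] * P n = P (Suc n) + smult (\<beta> n) (P (n - 1))"
  using rec_coeffs beta_0 by (cases n) (auto simp: rec_coeffs_def)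

lemma L_mult_eq_0_of_degree_less:
  assumes "\<And>k. k < m \<Longrightarrow> L (E * P k) = 0" and "degree q < m"
  shows "L (E * q) = 0"
  using assms
proof (induction m arbitrary: q)
  case (Suc m)
  show ?case
  proof (cases "degree q < m")
    case True
    then show ?thesis using Suc by simp
  next
    case False
    with Suc.prems(2) have q: "degree q = m" by simp
    define r where "r = q - smult (lead_coeff q) (P m)"
    have "L (E * r) = 0"
    proof (cases "r = 0")
      case False
      have "degree r \<le> m" unfolding r_def using q degree_P[of m] by (intro degree_diff_le) auto
      moreover have "coeff r m = 0" unfolding r_def using q lead_coeff_P[of m] degree_P[of m] by simp
      ultimately have "degree r < m" using False by (metis le_neq_implies_less leading_coeff_0_iff)
      then show ?thesis using Suc by simp
    qed simp
    moreover have "E * q = E * r + smult (lead_coeff q) (E * P m)"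
      by (simp add: r_def algebra_simps)
    ultimately show ?thesis using Suc.prems(1)[of m] by (simp add: L_add L_smult)
  qed
qed simp

lemma L_mult_P_eq_0: "degree q < n \<Longrightarrow> L (q * P n) = 0"
  using L_mult_eq_0_of_degree_less[of n "P n" q] L_P_P by (simp add: mult.commute)

lemma eq_0_if_orthogonal:
  assumes "\<And>k. L (E * P k) = 0"
  shows "E = 0"
  using L_mult_eq_0_of_degree_less[of "Suc (degree E)" E E] assms L_square_eq_0 by simp

definition sqnorm :: "nat \<Rightarrow> real" where
  "sqnorm k = L (P k * P k)"

definition beta_int :: "int \<Rightarrow> real" where
  "beta_int i = (if i < 0 then 0 else \<beta> (nat i))"

lemma L_xpow_P_P: "L ([:0, 1:] ^ j * P a * P k) = xpow_coeff beta_int j (int a) (int k) * sqnorm k"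
proof (induction j arbitrary: a)
  case 0
  then show ?case using L_P_P[of a k] by (simp add: sqnorm_def)
next
  case (Suc j)
  have "[:0, 1:] ^ Suc j * P a * P k
      = [:0, 1:] ^ j * P (Suc a) * P k + smult (\<beta> a) ([:0, 1:] ^ j * P (a - 1) * P k)"
    by (simp only: power_Suc2 mult.assoc x_mult_P) (simp add: algebra_simps)
  then have "L ([:0, 1:] ^ Suc j * P a * P k)
      = L ([:0, 1:] ^ j * P (Suc a) * P k) + \<beta> a * L ([:0, 1:] ^ j * P (a - 1) * P k)"
    by (simp only: L_add L_smult)
  also have "\<dots> = (xpow_coeff beta_int j (int a + 1) k + \<beta> a * xpow_coeff beta_int j (int (a - 1)) k) * sqnorm k"
    by (simp only: Suc.IH) (simp add: algebra_simps)
  also have "\<beta> a * xpow_coeff beta_int j (int (a - 1)) k = beta_int (int a) * xpow_coeff beta_int j (int a - 1) k"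
    using beta_0 by (cases "a = 0") (simp_all add: of_nat_diff beta_int_def)
  finally show ?case by simp
qed

lemma L_poly_P_P:
  assumes "degree q \<le> N"
  shows "L (q * P a * P k) = (\<Sum>j\<le>N. coeff q j * xpow_coeff beta_int j (int a) (int k)) * sqnorm k"
proof -
  have "q * P a * P k = (\<Sum>j\<le>N. smult (coeff q j) ([:0, 1:] ^ j * P a * P k))"
    by (subst poly_as_sum_of_monoms'[OF assms, symmetric]) (simp add: sum_distrib_right monom_altdef)
  then have "L (q * P a * P k) = (\<Sum>j\<le>N. coeff q j * L ([:0, 1:] ^ j * P a * P k))"
    by (simp add: L_sum L_smult)
  then show ?thesis
    by (simp only: L_xpow_P_P) (simp add: sum_distrib_right mult.assoc)
qed

end

locale semiclassical_ops = monic_ops +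
  fixes v :: "real poly"
  assumes L_pderiv: "L (pderiv q) = L (q * v)"
begin

lemma L_pderiv_P_P: "L (pderiv (P n) * P k) = (if k < n then L (v * P n * P k) else 0)"
proof (cases "k < n")
  case True
  have "L (P n * pderiv (P k)) = 0"
    using L_mult_P_eq_0[of "pderiv (P k)" n] True by (simp add: degree_pderiv degree_P mult.commute)
  then show ?thesis
    using True L_pderiv[of "P n * P k"] by (simp add: pderiv_mult L_add algebra_simps)
next
  case False
  have "degree (pderiv (P n)) < k \<or> pderiv (P n) = 0"
    using False by (cases n) (auto simp: degree_pderiv degree_P pderiv_eq_0_iff)
  then show ?thesis
    using False L_mult_P_eq_0[of "pderiv (P n)" k] by auto
qed

end

section \<open>Ladder operators for the sextic weight\<close>

definition ladder_A :: "(nat \<Rightarrow> real) \<Rightarrow> real \<Rightarrow> real \<Rightarrow> nat \<Rightarrow> real poly" where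
  "ladder_A \<beta> \<tau> t n =
     [:6 * (\<beta> n * Cc \<beta> n + \<beta> (n + 1) * Cc \<beta> (n + 1)) - 4 * \<tau> * (\<beta> n + \<beta> (n + 1)) - 2 * t,
       0, 6 * (\<beta> n + \<beta> (n + 1)) - 4 * \<tau>, 0, 6:]"

definition ladder_B :: "(nat \<Rightarrow> real) \<Rightarrow> real \<Rightarrow> nat \<Rightarrow> real poly" where
  "ladder_B \<beta> \<tau> n = [:0, 2 * \<beta> n * (3 * Cc \<beta> n - 2 * \<tau>), 0, 6 * \<beta> n:]"

lemma ladder_B_add_ladder_B_Suc:
  "ladder_B \<beta> \<tau> m + ladder_B \<beta> \<tau> (Suc m) = [:0, 1:] * ladder_A \<beta> \<tau> t m - dpotential \<tau> t"
  by (simp add: ladder_A_def ladder_B_def dpotential_def Cc_def algebra_simps)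

(* The coefficient of P (n + d) in the lowering relation, computed through the Jacobi operator
   with the recurrence coefficients shifted so that b 0 = \<beta> n. *)
lemma sextic_ladder_identity:
  fixes \<tau> t :: real and b :: "int \<Rightarrow> real" and d :: int
  defines "B \<equiv> [:0, 2 * b 0 * (3 * (b (-1) + b 0 + b 1) - 2 * \<tau>), 0, 6 * b 0:]"
    and "A \<equiv> [:6 * (b 0 * (b (-1) + b 0 + b 1) + b 1 * (b 0 + b 1 + b 2)) - 4 * \<tau> * (b 0 + b 1) - 2 * t,
              0, 6 * (b 0 + b 1) - 4 * \<tau>, 0, 6:]"
  shows "(if d < 0 then (\<Sum>j\<le>5. coeff (dpotential \<tau> t) j * xpow_coeff b j 0 d) else 0)
           + (\<Sum>j\<le>5. coeff B j * xpow_coeff b j 0 d)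
         = b 0 * (\<Sum>j\<le>5. coeff A j * xpow_coeff b j (-1) d)"
proof (cases "\<bar>d\<bar> \<le> 6")
  case True
  then have "d \<in> set [-6..6]" by auto
  then show ?thesis
    by (auto simp: upto.simps A_def B_def dpotential_def numeral_eq_Suc algebra_simps)
next
  case False
  then have "xpow_coeff b j 0 d = 0" "xpow_coeff b j (-1) d = 0" if "j \<le> 5" for j
    using that by (auto intro!: xpow_coeff_eq_0)
  then show ?thesis by simp
qed

locale sextic_ops = semiclassical_ops L P \<beta> "dpotential \<tau> t"
  for L :: "real poly \<Rightarrow> real" and P \<beta> and \<tau> t :: real
begin

lemma L_lowering_defect_mult_P:
  assumes "n \<noteq> 0"
  shows "L ((pderiv (P n) + ladder_B \<beta> \<tau> n * P n - smult (\<beta> n) (ladder_A \<beta> \<tau> t n * P (n - 1))) * P k) = 0"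
proof -
  define b where "b = (\<lambda>i. beta_int (int n + i))"
  have b: "b (-1) = \<beta> (n - 1)" "b 0 = \<beta> n" "b 1 = \<beta> (n + 1)" "b 2 = \<beta> (n + 2)"
    using assms by (simp_all add: b_def beta_int_def nat_add_distrib nat_diff_distrib')
  have shift: "xpow_coeff beta_int j a (int k) = xpow_coeff b j (a - int n) (int k - int n)" for j a
    using xpow_coeff_shift[of beta_int j a "int k" "int n"] by (simp add: b_def)
  have pred: "int (n - 1) - int n = -1" using assms by simp
  have B: "ladder_B \<beta> \<tau> n = [:0, 2 * b 0 * (3 * (b (-1) + b 0 + b 1) - 2 * \<tau>), 0, 6 * b 0:]"
    by (simp add: ladder_B_def Cc_def b)
  have A: "ladder_A \<beta> \<tau> t n = [:6 * (b 0 * (b (-1) + b 0 + b 1) + b 1 * (b 0 + b 1 + b 2))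
      - 4 * \<tau> * (b 0 + b 1) - 2 * t, 0, 6 * (b 0 + b 1) - 4 * \<tau>, 0, 6:]"
    by (simp add: ladder_A_def Cc_def b)
  have deg: "degree (dpotential \<tau> t) \<le> 5" "degree (ladder_B \<beta> \<tau> n) \<le> 5" "degree (ladder_A \<beta> \<tau> t n) \<le> 5"
    by (simp_all add: dpotential_def ladder_A_def ladder_B_def degree_pCons_eq_if)
  have "L ((pderiv (P n) + ladder_B \<beta> \<tau> n * P n - smult (\<beta> n) (ladder_A \<beta> \<tau> t n * P (n - 1))) * P k)
      = L (pderiv (P n) * P k) + L (ladder_B \<beta> \<tau> n * P n * P k)
        - \<beta> n * L (ladder_A \<beta> \<tau> t n * P (n - 1) * P k)"
    by (simp add: L_add L_diff L_smult algebra_simps)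
  also have "\<dots> = ((if k < n then (\<Sum>j\<le>5. coeff (dpotential \<tau> t) j * xpow_coeff beta_int j n k) else 0)
      + (\<Sum>j\<le>5. coeff (ladder_B \<beta> \<tau> n) j * xpow_coeff beta_int j n k)
      - \<beta> n * (\<Sum>j\<le>5. coeff (ladder_A \<beta> \<tau> t n) j * xpow_coeff beta_int j (int (n - 1)) k)) * sqnorm k"
    by (simp only: L_pderiv_P_P L_poly_P_P[OF deg(1)] L_poly_P_P[OF deg(2)] L_poly_P_P[OF deg(3)])
       (simp add: algebra_simps)
  also have "\<dots> = 0"
    using sextic_ladder_identity[where \<tau> = \<tau> and t = t and b = b and d = "int k - int n"]
    unfolding shift A B pred b(2)[symmetric] by (cases "k < n") simp_all
  finally show ?thesis .
qed

lemma pderiv_P_lowering: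
  "pderiv (P n) = smult (\<beta> n) (ladder_A \<beta> \<tau> t n * P (n - 1)) - ladder_B \<beta> \<tau> n * P n"
proof (cases "n = 0")
  case True
  then show ?thesis by (simp add: P_0 beta_0 ladder_B_def)
next
  case False
  then have "pderiv (P n) + ladder_B \<beta> \<tau> n * P n - smult (\<beta> n) (ladder_A \<beta> \<tau> t n * P (n - 1)) = 0"
    using L_lowering_defect_mult_P by (intro eq_0_if_orthogonal)
  then show ?thesis by (simp add: algebra_simps)
qed

lemma pderiv_P_raising:
  assumes "n \<ge> 1"
  shows "pderiv (P (n - 1)) = (ladder_B \<beta> \<tau> n + dpotential \<tau> t) * P (n - 1) - ladder_A \<beta> \<tau> t (n - 1) * P n"
proof -
  obtain m where n: "n = Suc m" using assms by (cases n) auto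
  have "pderiv (P m) = ladder_A \<beta> \<tau> t m * smult (\<beta> m) (P (m - 1)) - ladder_B \<beta> \<tau> m * P m"
    using pderiv_P_lowering[of m] by simp
  also have "smult (\<beta> m) (P (m - 1)) = [:0, 1:] * P m - P (Suc m)"
    using x_mult_P[of m] by simp
  also have "ladder_A \<beta> \<tau> t m * ([:0, 1:] * P m - P (Suc m)) - ladder_B \<beta> \<tau> m * P m
      = ([:0, 1:] * ladder_A \<beta> \<tau> t m - ladder_B \<beta> \<tau> m) * P m - ladder_A \<beta> \<tau> t m * P (Suc m)"
    by (simp add: algebra_simps)
  also have "[:0, 1:] * ladder_A \<beta> \<tau> t m - ladder_B \<beta> \<tau> m = ladder_B \<beta> \<tau> (Suc m) + dpotential \<tau> t"
    using ladder_B_add_ladder_B_Suc[of \<beta> \<tau> m t] by (simp add: algebra_simps)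
  finally show ?thesis using n by simp
qed

end

lemma ladder_elimination:
  fixes a a' a0 b b' c v p p' p'' q q' :: real
  assumes "a \<noteq> 0"
    and p': "p' = c * (a * q) - b * p"
    and p'': "p'' = c * (a' * q + a * q') - (b' * p + b * p')"
    and q': "q' = (b + v) * q - a0 * p"
  shows "p'' + (- v - a' / a) * p' + (b' - b * (b + v) + c * a * a0 - b * a' / a) * p = 0"
proof -
  have "a * (p'' + (- v - a' / a) * p' + (b' - b * (b + v) + c * a * a0 - b * a' / a) * p)
      = a * p'' - (v * a + a') * p' + ((b' - b * (b + v) + c * a * a0) * a - b * a') * p"
    using \<open>a \<noteq> 0\<close> by (simp add: field_simps)
  also have "\<dots> = 0" unfolding p'' q' p' by algebra
  finally show ?thesis using \<open>a \<noteq> 0\<close> by simp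
qed

lemma poly_ladder_A:
  "poly (ladder_A \<beta> \<tau> t n) x = 6 * x ^ 4 - 4 * \<tau> * x ^ 2 - 2 * t + 6 * \<beta> n * Cc \<beta> n
     + 6 * \<beta> (n + 1) * Cc \<beta> (n + 1) + (\<beta> n + \<beta> (n + 1)) * (6 * x ^ 2 - 4 * \<tau>)"
  by (simp add: ladder_A_def; algebra)

lemma poly_pderiv_ladder_A:
  "poly (pderiv (ladder_A \<beta> \<tau> t n)) x = 4 * x * (6 * x ^ 2 - 2 * \<tau> + 3 * (\<beta> n + \<beta> (n + 1)))"
  by (simp add: ladder_A_def pderiv_pCons; algebra)

lemma poly_ladder_B: "poly (ladder_B \<beta> \<tau> n) x = 2 * x * \<beta> n * (3 * Cc \<beta> n - 2 * \<tau> + 3 * x ^ 2)"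
  by (simp add: ladder_B_def; algebra)

lemma poly_pderiv_ladder_B: "poly (pderiv (ladder_B \<beta> \<tau> n)) x = 2 * \<beta> n * (3 * Cc \<beta> n - 2 * \<tau> + 9 * x ^ 2)"
  by (simp add: ladder_B_def pderiv_pCons; algebra)

lemma Rn_eq:
  assumes "poly (ladder_A \<beta> \<tau> t n) x \<noteq> 0"
  shows "Rn \<beta> \<tau> t n x = - poly (dpotential \<tau> t) x
           - poly (pderiv (ladder_A \<beta> \<tau> t n)) x / poly (ladder_A \<beta> \<tau> t n) x"
  using assms
  unfolding Rn_def poly_ladder_A poly_pderiv_ladder_A poly_dpotential
  by (simp add: field_simps; algebra)

lemma Tn_eq:
  assumes "n \<ge> 1" and "poly (ladder_A \<beta> \<tau> t n) x \<noteq> 0"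
  shows "Tn \<beta> \<tau> t n x = poly (pderiv (ladder_B \<beta> \<tau> n)) x
           - poly (ladder_B \<beta> \<tau> n) x * (poly (ladder_B \<beta> \<tau> n) x + poly (dpotential \<tau> t) x)
           + \<beta> n * poly (ladder_A \<beta> \<tau> t n) x * poly (ladder_A \<beta> \<tau> t (n - 1)) x
           - poly (ladder_B \<beta> \<tau> n) x * poly (pderiv (ladder_A \<beta> \<tau> t n)) x / poly (ladder_A \<beta> \<tau> t n) x"
proof -
  define D where "D = poly (ladder_A \<beta> \<tau> t n) x"
  have D: "D = 6 * x ^ 4 - 4 * \<tau> * x ^ 2 - 2 * t + 6 * \<beta> n * Cc \<beta> n
     + 6 * \<beta> (n + 1) * Cc \<beta> (n + 1) + (\<beta> n + \<beta> (n + 1)) * (6 * x ^ 2 - 4 * \<tau>)"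
    by (simp add: D_def poly_ladder_A)
  have den2: "2 * \<tau> * (\<beta> n + \<beta> (n + 1)) - 3 * x ^ 2 * (\<beta> n + \<beta> (n + 1))
      - 3 * Cc \<beta> n * \<beta> n - 3 * Cc \<beta> (n + 1) * \<beta> (n + 1) + t - 3 * x ^ 4 + 2 * \<tau> * x ^ 2 = - D / 2"
    unfolding D by algebra
  have den1: "6 * Cc \<beta> n * \<beta> n + 6 * Cc \<beta> (n + 1) * \<beta> (n + 1)
      + (\<beta> n + \<beta> (n + 1)) * (6 * x ^ 2 - 4 * \<tau>) - 2 * t + 6 * x ^ 4 - 4 * \<tau> * x ^ 2 = D"
    unfolding D by algebra
  have A_prev: "poly (ladder_A \<beta> \<tau> t (n - 1)) x = 6 * Cc \<beta> (n - 1) * \<beta> (n - 1) + 6 * Cc \<beta> n * \<beta> n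
      + (\<beta> (n - 1) + \<beta> n) * (6 * x ^ 2 - 4 * \<tau>) - 2 * t + 6 * x ^ 4 - 4 * \<tau> * x ^ 2"
    using assms(1) by (simp add: poly_ladder_A; algebra)
  have last_term: "4 * x ^ 2 * \<beta> n * (3 * Cc \<beta> n - 2 * \<tau> + 3 * x ^ 2)
      * (3 * (\<beta> n + \<beta> (n + 1)) - 2 * \<tau> + 6 * x ^ 2) / (- D / 2)
    = - (2 * x * \<beta> n * (3 * Cc \<beta> n - 2 * \<tau> + 3 * x ^ 2)
        * (4 * x * (6 * x ^ 2 - 2 * \<tau> + 3 * (\<beta> n + \<beta> (n + 1)))) / D)"
    using assms(2) unfolding D_def by (simp add: field_simps) algebra
  show ?thesis
    unfolding Tn_def poly_ladder_B poly_pderiv_ladder_B poly_pderiv_ladder_A poly_dpotential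
      D_def[symmetric] den1 den2 A_prev last_term
    by algebra
qed

lemma sextic_ops_omega_functional:
  assumes "monic_OPS (omega \<tau> t) P" and "rec_coeffs P \<beta>"
  shows "sextic_ops (omega_functional \<tau> t) P \<beta> \<tau> t"
proof unfold_locales
  show "omega_functional \<tau> t (p + q) = omega_functional \<tau> t p + omega_functional \<tau> t q" for p q
    by (rule omega_functional_add)
  show "omega_functional \<tau> t (smult c p) = c * omega_functional \<tau> t p" for c p
    by (rule omega_functional_smult)
  show "omega_functional \<tau> t (q * q) = 0 \<Longrightarrow> q = 0" for q
    by (rule omega_functional_square_eq_0)
  show "omega_functional \<tau> t (pderiv q) = omega_functional \<tau> t (q * dpotential \<tau> t)" for q
    by (rule omega_functional_pderiv)
  show "degree (P n) = n" "lead_coeff (P n) = 1" for n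
    using assms(1) unfolding monic_OPS_def by blast+
  show "m \<noteq> n \<Longrightarrow> omega_functional \<tau> t (P m * P n) = 0" for m n
    using assms(1) by (simp add: monic_OPS_def omega_functional_def)
qed (rule assms(2))

theorem theorem4p4:
  fixes \<tau> t :: real and P :: "nat \<Rightarrow> real poly" and \<beta> :: "nat \<Rightarrow> real"
    and n :: nat and x :: real
  assumes "monic_OPS (omega \<tau> t) P"
    and "rec_coeffs P \<beta>"
    and "n \<ge> 1"
    and "6 * x ^ 4 - 4 * \<tau> * x ^ 2 - 2 * t + 6 * \<beta> n * Cc \<beta> n
          + 6 * \<beta> (n + 1) * Cc \<beta> (n + 1) + (\<beta> n + \<beta> (n + 1)) * (6 * x ^ 2 - 4 * \<tau>) \<noteq> 0"
  shows "poly (pderiv (pderiv (P n))) x + Rn \<beta> \<tau> t n x * poly (pderiv (P n)) x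
           + Tn \<beta> \<tau> t n x * poly (P n) x = 0"
proof -
  interpret sextic_ops "omega_functional \<tau> t" P \<beta> \<tau> t
    using assms(1,2) by (rule sextic_ops_omega_functional)
  let ?A = "ladder_A \<beta> \<tau> t n" and ?B = "ladder_B \<beta> \<tau> n"
  have A: "poly ?A x \<noteq> 0" using assms(4) by (simp add: poly_ladder_A)
  have lowering: "pderiv (P n) = smult (\<beta> n) (?A * P (n - 1)) - ?B * P n"
    by (rule pderiv_P_lowering)
  have second_derivative: "pderiv (pderiv (P n))
      = smult (\<beta> n) (pderiv ?A * P (n - 1) + ?A * pderiv (P (n - 1))) - (pderiv ?B * P n + ?B * pderiv (P n))"
    by (subst (1) lowering) (simp add: pderiv_mult pderiv_smult pderiv_diff algebra_simps)
  show ?thesis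
    unfolding Rn_eq[OF A] Tn_eq[OF assms(3) A]
  proof (rule ladder_elimination[OF A])
    show "poly (pderiv (P n)) x = \<beta> n * (poly ?A x * poly (P (n - 1)) x) - poly ?B x * poly (P n) x"
      by (subst lowering) simp
    show "poly (pderiv (pderiv (P n))) x
        = \<beta> n * (poly (pderiv ?A) x * poly (P (n - 1)) x + poly ?A x * poly (pderiv (P (n - 1))) x)
          - (poly (pderiv ?B) x * poly (P n) x + poly ?B x * poly (pderiv (P n)) x)"
      by (subst second_derivative) simp
    show "poly (pderiv (P (n - 1))) x
        = (poly ?B x + poly (dpotential \<tau> t) x) * poly (P (n - 1)) x - poly (ladder_A \<beta> \<tau> t (n - 1)) x * poly (P n) x"
      by (subst pderiv_P_raising[OF assms(3)]) simp
  qed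
qed

end
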